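(* Let $S$ be an infinite set and $\mathcal{F}\subseteq 2^S$ a family closed under finite unions and finite intersections. Let $\mathbf{A}=(A_1,\dots,A_k)$ be a classification problem with $k\ge 2$. Then $\mathbf{A}\in\mathit{class}_k(\mathcal{F})$ if and only if $(A_i,A_j)\in\mathit{class}_2(\mathcal{F})$ for all $1\le i\ne j\le k$.
   Context: A classification problem is a vector $(A_1,\dots,A_k)$, $k\ge1$, of pairwise disjoint infinite subsets of $S$. For vectors $\mathbf{B}=(B_1,\dots,B_m)$ and $\mathbf{Q}=(Q_1,\dots,Q_k)$, $\mathbf{B}\leq\mathbf{Q}$ means $1\le m\le k$ and there is an injective $\sigma:\{1,\dots,m\}\to\{1,\dots,k\}$ with $B_i\subseteq Q_{\sigma(i)}$ for all $i$. An $\mathcal{F}$-partition is a vector $(Q_1,\dots,Q_k)$ of pairwise disjoint sets $Q_i\in\mathcal{F}$ with $Q_1\cup\dots\cup Q_k=S$. $\mathit{class}_k(\mathcal{F})$ is the set of classification problems $\mathbf{A}$ of length $k$ for which an $\mathcal{F}$-partition $\mathbf{Q}$ of length $k$ with $\mathbf{A}\leq\mathbf{Q}$ exists. *)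

theory Defs
  imports Main
begin

text \<open>Vectors (X_1,...,X_k) are represented 0-indexed as functions nat => 'a set,
  only the entries with index < k being relevant.\<close>

definition classification_problem :: "'a set \<Rightarrow> nat \<Rightarrow> (nat \<Rightarrow> 'a set) \<Rightarrow> bool" where
  "classification_problem S k A \<longleftrightarrow> k \<ge> 1 \<and> (\<forall>i<k. A i \<subseteq> S \<and> infinite (A i)) \<and>
     (\<forall>i<k. \<forall>j<k. i \<noteq> j \<longrightarrow> A i \<inter> A j = {})"

definition vec_le :: "nat \<Rightarrow> (nat \<Rightarrow> 'a set) \<Rightarrow> nat \<Rightarrow> (nat \<Rightarrow> 'a set) \<Rightarrow> bool" where
  "vec_le m B k Q \<longleftrightarrow> 1 \<le> m \<and> m \<le> k \<and>
     (\<exists>\<sigma>. inj_on \<sigma> {..<m} \<and> \<sigma> ` {..<m} \<subseteq> {..<k} \<and> (\<forall>i<m. B i \<subseteq> Q (\<sigma> i)))"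

definition F_partition :: "'a set \<Rightarrow> 'a set set \<Rightarrow> nat \<Rightarrow> (nat \<Rightarrow> 'a set) \<Rightarrow> bool" where
  "F_partition S F k Q \<longleftrightarrow> (\<forall>i<k. Q i \<in> F) \<and>
     (\<forall>i<k. \<forall>j<k. i \<noteq> j \<longrightarrow> Q i \<inter> Q j = {}) \<and> (\<Union>i<k. Q i) = S"

definition classk :: "'a set \<Rightarrow> 'a set set \<Rightarrow> nat \<Rightarrow> (nat \<Rightarrow> 'a set) set" where
  "classk S F k = {A. classification_problem S k A \<and> (\<exists>Q. F_partition S F k Q \<and> vec_le k A k Q)}"

end

theory Submission
  imports Defs
begin

text \<open>Both directions go through the two-block partitions (C, S - C) separating A_i from A_j.
  A k-partition yields them by merging all blocks but the one containing A_i. Conversely,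
  given separators D i j of A_i from A_j, the sets T i = S \<inter> \<Inter>{D i j | i < j < k} cover S
  (T (k-1) = S) and are closed under complement in S for i < k-1; the partition is
  Q i = T i - \<Union>{T j | j < i}, and A_i \<subseteq> Q i because A_i lies in each D i j and misses each D j i.\<close>

definition F_separates :: "'a set \<Rightarrow> 'a set set \<Rightarrow> 'a set \<Rightarrow> 'a set \<Rightarrow> bool" where
  "F_separates S F X Y \<longleftrightarrow> (\<exists>C. C \<in> F \<and> S - C \<in> F \<and> C \<subseteq> S \<and> X \<subseteq> C \<and> Y \<subseteq> S - C)"

lemma UN_closed:
  assumes "finite I" "I \<noteq> {}" "\<And>X Y. X \<in> F \<Longrightarrow> Y \<in> F \<Longrightarrow> X \<union> Y \<in> F"
    and "\<And>i. i \<in> I \<Longrightarrow> f i \<in> F"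
  shows "(\<Union>i\<in>I. f i) \<in> F"
  using assms(1,2,4) by (induction I rule: finite_ne_induct) (auto intro: assms(3))

lemma Int_INT_closed:
  assumes "finite I" "Z \<in> F" "\<And>X Y. X \<in> F \<Longrightarrow> Y \<in> F \<Longrightarrow> X \<inter> Y \<in> F"
    and "\<And>i. i \<in> I \<Longrightarrow> f i \<in> F"
  shows "Z \<inter> (\<Inter>i\<in>I. f i) \<in> F"
  using assms(1,4)
proof (induction I rule: finite_induct)
  case empty
  then show ?case using assms(2) by simp
next
  case (insert x I)
  have "Z \<inter> (\<Inter>i\<in>insert x I. f i) = f x \<inter> (Z \<inter> (\<Inter>i\<in>I. f i))" by auto
  then show ?case using insert assms(3) by simp
qed

lemma F_separates_space_mem:
  assumes "F_separates S F X Y" "\<And>X Y. X \<in> F \<Longrightarrow> Y \<in> F \<Longrightarrow> X \<union> Y \<in> F"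
  shows "S \<in> F"
proof -
  obtain C where "C \<in> F" "S - C \<in> F" "C \<subseteq> S"
    using assms(1) unfolding F_separates_def by blast
  moreover have "C \<union> (S - C) = S" using \<open>C \<subseteq> S\<close> by blast
  ultimately show ?thesis using assms(2)[of C "S - C"] by simp
qed

lemma F_partition_complement:
  assumes "F_partition S F k Q" "l < k"
  shows "S - Q l = (\<Union>j\<in>{..<k} - {l}. Q j)"
  using assms unfolding F_partition_def by blast

lemma classk_imp_F_separates:
  assumes union: "\<And>X Y. X \<in> F \<Longrightarrow> Y \<in> F \<Longrightarrow> X \<union> Y \<in> F"
    and "A \<in> classk S F k" "i < k" "j < k" "i \<noteq> j"
  shows "F_separates S F (A i) (A j)"
proof -
  obtain Q \<sigma> where Q: "F_partition S F k Q" and "inj_on \<sigma> {..<k}"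
    and "\<sigma> ` {..<k} \<subseteq> {..<k}" and A_sub: "\<forall>i<k. A i \<subseteq> Q (\<sigma> i)"
    using assms(2) unfolding classk_def vec_le_def by blast
  then have \<sigma>: "\<sigma> i < k" "\<sigma> j \<in> {..<k} - {\<sigma> i}"
    using assms(3-5) by (auto simp: inj_on_def)
  have compl: "S - Q (\<sigma> i) = (\<Union>l\<in>{..<k} - {\<sigma> i}. Q l)"
    using F_partition_complement[OF Q \<sigma>(1)] .
  have "S - Q (\<sigma> i) \<in> F"
    unfolding compl using Q \<sigma> by (intro UN_closed[OF _ _ union]) (auto simp: F_partition_def)
  moreover have "A j \<subseteq> S - Q (\<sigma> i)"
    unfolding compl using A_sub assms(4) \<sigma>(2) by blast
  moreover have "Q (\<sigma> i) \<in> F" "Q (\<sigma> i) \<subseteq> S"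
    using Q \<sigma>(1) unfolding F_partition_def by auto
  ultimately show ?thesis
    unfolding F_separates_def using A_sub assms(3) by blast
qed

lemma vec_le_pointwise:
  assumes "1 \<le> k" "\<And>i. i < k \<Longrightarrow> A i \<subseteq> Q i"
  shows "vec_le k A k Q"
  unfolding vec_le_def using assms by (intro conjI exI[of _ id]) auto

lemma classification_problem_pair:
  assumes "classification_problem S k A" "i < k" "j < k" "i \<noteq> j"
  shows "classification_problem S 2 (\<lambda>n. if n = 0 then A i else A j)"
  using assms unfolding classification_problem_def by (auto simp: less_2_cases_iff)

lemma classk_two_if_F_separates:
  assumes "classification_problem S 2 B" "F_separates S F (B 0) (B 1)"
  shows "B \<in> classk S F 2"
proof -
  obtain C where C: "C \<in> F" "S - C \<in> F" "C \<subseteq> S" "B 0 \<subseteq> C" "B 1 \<subseteq> S - C"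
    using assms(2) unfolding F_separates_def by blast
  let ?Q = "\<lambda>n::nat. if n = 0 then C else S - C"
  have "F_partition S F 2 ?Q"
    using C unfolding F_partition_def by (auto simp: less_2_cases_iff lessThan_nat_numeral)
  moreover have "vec_le 2 B 2 ?Q"
    using C by (intro vec_le_pointwise) (auto simp: less_2_cases_iff)
  ultimately show ?thesis
    using assms(1) unfolding classk_def by blast
qed

lemma F_partition_disjointify:
  assumes inter: "\<And>X Y. X \<in> F \<Longrightarrow> Y \<in> F \<Longrightarrow> X \<inter> Y \<in> F"
    and T_in: "\<And>i. i < k \<Longrightarrow> T i \<in> F"
    and T_compl: "\<And>i. Suc i < k \<Longrightarrow> S - T i \<in> F"
    and cover: "(\<Union>i<k. T i) = S"
  shows "F_partition S F k (\<lambda>i. T i - (\<Union>j<i. T j))"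
  unfolding F_partition_def
proof (intro conjI allI impI)
  fix i assume "i < k"
  moreover have "T i - (\<Union>j<i. T j) = T i \<inter> (\<Inter>j\<in>{..<i}. S - T j)"
    using cover \<open>i < k\<close> by auto
  moreover have "T i \<inter> (\<Inter>j\<in>{..<i}. S - T j) \<in> F"
    using \<open>i < k\<close> T_in T_compl by (intro Int_INT_closed[OF _ _ inter]) auto
  ultimately show "T i - (\<Union>j<i. T j) \<in> F" by simp
next
  fix i j :: nat assume "i \<noteq> j"
  then show "(T i - (\<Union>l<i. T l)) \<inter> (T j - (\<Union>l<j. T l)) = {}"
    by (cases "i < j") auto
next
  show "(\<Union>i<k. T i - (\<Union>j<i. T j)) = S"
  proof
    show "S \<subseteq> (\<Union>i<k. T i - (\<Union>j<i. T j))"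
    proof
      fix x assume "x \<in> S"
      then obtain i where "i < k" "x \<in> T i" using cover by blast
      define m where "m = (LEAST m. x \<in> T m)"
      have "x \<in> T m" "m \<le> i"
        using LeastI[of "\<lambda>m. x \<in> T m"] Least_le[of "\<lambda>m. x \<in> T m"] \<open>x \<in> T i\<close>
        unfolding m_def by blast+
      moreover have "x \<notin> (\<Union>j<m. T j)"
        using not_less_Least[of _ "\<lambda>m. x \<in> T m"] unfolding m_def by blast
      ultimately show "x \<in> (\<Union>i<k. T i - (\<Union>j<i. T j))"
        using \<open>i < k\<close> by (intro UN_I[of m]) auto
    qed
  qed (use cover in blast)
qed

lemma classk_if_pairwise_F_separates:
  assumes union: "\<And>X Y. X \<in> F \<Longrightarrow> Y \<in> F \<Longrightarrow> X \<union> Y \<in> F"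
    and inter: "\<And>X Y. X \<in> F \<Longrightarrow> Y \<in> F \<Longrightarrow> X \<inter> Y \<in> F"
    and A: "classification_problem S k A" and "k \<ge> 2"
    and sep: "\<And>i j. i < k \<Longrightarrow> j < k \<Longrightarrow> i \<noteq> j \<Longrightarrow> F_separates S F (A i) (A j)"
  shows "A \<in> classk S F k"
proof -
  obtain D where D: "\<And>i j. i < k \<Longrightarrow> j < k \<Longrightarrow> i \<noteq> j \<Longrightarrow>
      D i j \<in> F \<and> S - D i j \<in> F \<and> D i j \<subseteq> S \<and> A i \<subseteq> D i j \<and> A j \<subseteq> S - D i j"
    using sep unfolding F_separates_def by metis
  have S_in: "S \<in> F"
    using F_separates_space_mem[OF sep union, of 0 1] \<open>k \<ge> 2\<close> by simp
  define T where "T i = S \<inter> (\<Inter>j\<in>{i<..<k}. D i j)" for i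
  have "T i \<in> F" for i
    unfolding T_def using D by (intro Int_INT_closed[OF _ S_in inter]) auto
  moreover have "S - T i \<in> F" if "Suc i < k" for i
  proof -
    have "S - T i = (\<Union>j\<in>{i<..<k}. S - D i j)" unfolding T_def by blast
    moreover have "(\<Union>j\<in>{i<..<k}. S - D i j) \<in> F"
      using D that by (intro UN_closed[OF _ _ union]) auto
    ultimately show ?thesis by simp
  qed
  moreover have "(\<Union>i<k. T i) = S"
  proof -
    have "T (k - 1) = S" unfolding T_def by auto
    then show ?thesis
      using \<open>k \<ge> 2\<close> unfolding T_def by (auto intro!: UN_I[of "k - 1"])
  qed
  ultimately have partition: "F_partition S F k (\<lambda>i. T i - (\<Union>j<i. T j))"
    by (intro F_partition_disjointify[OF inter])
  have "A i \<subseteq> T i - (\<Union>j<i. T j)" if "i < k" for i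
  proof -
    have "A i \<subseteq> D i j" if "j \<in> {i<..<k}" for j
      using D[of i j] \<open>i < k\<close> that by auto
    then have "A i \<subseteq> T i"
      unfolding T_def using A \<open>i < k\<close> by (fastforce simp: classification_problem_def)
    moreover have "A i \<inter> T j = {}" if "j < i" for j
      using D[of j i] \<open>i < k\<close> that unfolding T_def by auto
    ultimately show ?thesis by blast
  qed
  then have "vec_le k A k (\<lambda>i. T i - (\<Union>j<i. T j))"
    using \<open>k \<ge> 2\<close> by (intro vec_le_pointwise) auto
  then show ?thesis
    using A partition unfolding classk_def by blast
qed

theorem lemma2p3:
  fixes S :: "'a set" and F :: "'a set set" and A :: "nat \<Rightarrow> 'a set" and k :: nat
  assumes "infinite S"
    and "F \<subseteq> Pow S"
    and "\<And>X Y. X \<in> F \<Longrightarrow> Y \<in> F \<Longrightarrow> X \<union> Y \<in> F"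
    and "\<And>X Y. X \<in> F \<Longrightarrow> Y \<in> F \<Longrightarrow> X \<inter> Y \<in> F"
    and "classification_problem S k A"
    and "k \<ge> 2"
  shows "A \<in> classk S F k \<longleftrightarrow>
    (\<forall>i<k. \<forall>j<k. i \<noteq> j \<longrightarrow> (\<lambda>n. if n = 0 then A i else A j) \<in> classk S F 2)"
proof
  assume "A \<in> classk S F k"
  then show "\<forall>i<k. \<forall>j<k. i \<noteq> j \<longrightarrow> (\<lambda>n. if n = 0 then A i else A j) \<in> classk S F 2"
    using classk_imp_F_separates[OF assms(3)] classification_problem_pair[OF assms(5)]
    by (auto intro!: classk_two_if_F_separates)
next
  assume pairs: "\<forall>i<k. \<forall>j<k. i \<noteq> j \<longrightarrow> (\<lambda>n. if n = 0 then A i else A j) \<in> classk S F 2"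
  have "F_separates S F (A i) (A j)" if "i < k" "j < k" "i \<noteq> j" for i j
    using classk_imp_F_separates[OF assms(3), of "\<lambda>n. if n = 0 then A i else A j" S 2 0 1]
      pairs that by simp
  then show "A \<in> classk S F k"
    using classk_if_pairwise_F_separates[OF assms(3,4,5,6)] by blast
qed

end
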